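(* Let $G=(V,E)$ be a graph with a string representation $\varphi$, let $D\subseteq V$, suppose the robber is confined to $D$, and let $\pi$ be a shortest curve relative to $D$ in $\varphi$. Then five cops can prevent the robber from entering any vertex whose string intersects $\pi$, after a finite number of initial moves.
   Context: A string representation of $G$ assigns to each vertex $v$ a bounded curve $\varphi(v)\subseteq\mathbb{R}^2$ (continuous image of $[0,1]$) so that distinct $u,v$ are adjacent iff $\varphi(u)\cap\varphi(v)\ne\emptyset$. A path $P$ in $G$ is a shortest path relative to $D$ if it is a shortest path (between its endpoints) in $G[P\cup D]$. If $P$ is a shortest path relative to $D$ from $u$ to $v$, and $A\in\varphi(u)$, $B\in\varphi(v)$ are points, a curve $\pi\subseteq\bigcup_{p\in P}\varphi(p)$ from $A$ to $B$ such that for every $p\in P$ the set $\pi\cap\varphi(p)$ is connected, and these intersections appear along $\pi$ in the same order as the vertices of $P$, is a shortest curve of $P$ relative to $D$; a shortest curve relative to $D$ is a shortest curve of some shortest path relative to $D$. Game of cops and robber: cops are placed, then the robber; players alternate starting with cops; each piece stays or moves to an adjacent vertex; capture happens when a cop occupies the robber's vertex. The robber is confined to $D$ if the cops' strategy ensures he is immediately captured upon moving to any vertex outside $D$. *)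

theory Defs
  imports "HOL-Analysis.Analysis"
begin

definition is_curve :: "(real^2) set \<Rightarrow> bool" where
  "is_curve S \<longleftrightarrow> (\<exists>g. path g \<and> path_image g = S)"

definition string_rep :: "'v set \<Rightarrow> ('v \<Rightarrow> 'v \<Rightarrow> bool) \<Rightarrow> ('v \<Rightarrow> (real^2) set) \<Rightarrow> bool" where
  "string_rep V E \<phi> \<longleftrightarrow> (\<forall>v\<in>V. is_curve (\<phi> v)) \<and>
     (\<forall>u v. E u v \<longleftrightarrow> (u \<in> V \<and> v \<in> V \<and> u \<noteq> v \<and> \<phi> u \<inter> \<phi> v \<noteq> {}))"

definition walk_in :: "('v \<Rightarrow> 'v \<Rightarrow> bool) \<Rightarrow> 'v set \<Rightarrow> 'v list \<Rightarrow> bool" where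
  "walk_in E W ps \<longleftrightarrow> ps \<noteq> [] \<and> set ps \<subseteq> W \<and>
     (\<forall>i. Suc i < length ps \<longrightarrow> E (ps ! i) (ps ! Suc i))"

definition shortest_path_rel :: "'v set \<Rightarrow> ('v \<Rightarrow> 'v \<Rightarrow> bool) \<Rightarrow> 'v set \<Rightarrow> 'v list \<Rightarrow> bool" where
  "shortest_path_rel V E D P \<longleftrightarrow> walk_in E V P \<and> distinct P \<and>
     (\<forall>Q. walk_in E (set P \<union> D) Q \<and> hd Q = hd P \<and> last Q = last P \<longrightarrow> length P \<le> length Q)"

text \<open>pi is a shortest curve of P (from A to B): pi is a curve from A to B (parametrised by g)
  contained in the union of the strings of P, each pi \<inter> phi(p) is connected, and the
  intersections appear along pi in the order of P (their first and last appearance along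
  the parametrisation are ordered as the vertices of P).\<close>
definition shortest_curve_of :: "('v \<Rightarrow> (real^2) set) \<Rightarrow> 'v list \<Rightarrow> real^2 \<Rightarrow> real^2 \<Rightarrow> (real^2) set \<Rightarrow> bool" where
  "shortest_curve_of \<phi> P A B \<pi> \<longleftrightarrow>
     A \<in> \<phi> (hd P) \<and> B \<in> \<phi> (last P) \<and> \<pi> \<subseteq> (\<Union>p\<in>set P. \<phi> p) \<and>
     (\<forall>p\<in>set P. connected (\<pi> \<inter> \<phi> p)) \<and>
     (\<exists>g. path g \<and> path_image g = \<pi> \<and> pathstart g = A \<and> pathfinish g = B \<and>
        (\<forall>i<length P. {t\<in>{0..1}. g t \<in> \<phi> (P ! i)} \<noteq> {}) \<and>
        (\<forall>i j. i < j \<and> j < length P \<longrightarrow>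
            Inf {t\<in>{0..1}. g t \<in> \<phi> (P ! i)} \<le> Inf {t\<in>{0..1}. g t \<in> \<phi> (P ! j)} \<and>
            Sup {t\<in>{0..1}. g t \<in> \<phi> (P ! i)} \<le> Sup {t\<in>{0..1}. g t \<in> \<phi> (P ! j)}))"

definition shortest_curve_rel :: "'v set \<Rightarrow> ('v \<Rightarrow> 'v \<Rightarrow> bool) \<Rightarrow> ('v \<Rightarrow> (real^2) set) \<Rightarrow> 'v set \<Rightarrow> (real^2) set \<Rightarrow> bool" where
  "shortest_curve_rel V E \<phi> D \<pi> \<longleftrightarrow>
     (\<exists>P A B. shortest_path_rel V E D P \<and> shortest_curve_of \<phi> P A B \<pi>)"

text \<open>A robber play is a sequence r 0, r 1, ... (r 0 is the placement,
  r (i+1) the position after his i-th move).  A strategy for k cops maps the robber history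
  to the positions of cops 0..k-1; cop_pos s r i is the cop position after i cop moves
  (i = 0: placement), which depends on r 0 .. r (i-1).  Order: cops placed, robber placed,
  then cops move, robber moves, ...\<close>
definition robber_walk :: "'v set \<Rightarrow> ('v \<Rightarrow> 'v \<Rightarrow> bool) \<Rightarrow> (nat \<Rightarrow> 'v) \<Rightarrow> bool" where
  "robber_walk V E r \<longleftrightarrow> (\<forall>i. r i \<in> V) \<and> (\<forall>i. r (Suc i) = r i \<or> E (r i) (r (Suc i)))"

definition cop_pos :: "('v list \<Rightarrow> nat \<Rightarrow> 'v) \<Rightarrow> (nat \<Rightarrow> 'v) \<Rightarrow> nat \<Rightarrow> nat \<Rightarrow> 'v" where
  "cop_pos s r i = s (map r [0..<i])"

definition legal_cop_strategy :: "'v set \<Rightarrow> ('v \<Rightarrow> 'v \<Rightarrow> bool) \<Rightarrow> nat \<Rightarrow> ('v list \<Rightarrow> nat \<Rightarrow> 'v) \<Rightarrow> bool" where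
  "legal_cop_strategy V E k s \<longleftrightarrow> (\<forall>j<k. s [] j \<in> V) \<and>
     (\<forall>r. robber_walk V E r \<longrightarrow> (\<forall>i. \<forall>j<k.
        cop_pos s r (Suc i) j = cop_pos s r i j \<or> E (cop_pos s r i j) (cop_pos s r (Suc i) j)))"

text \<open>The robber, standing on r i (just placed / just moved there), is captured at that
  moment: either he stands on a cop, or a cop moves onto him in the cops' next move.\<close>
definition captured_at :: "nat \<Rightarrow> ('v list \<Rightarrow> nat \<Rightarrow> 'v) \<Rightarrow> (nat \<Rightarrow> 'v) \<Rightarrow> nat \<Rightarrow> bool" where
  "captured_at k s r i \<longleftrightarrow> (\<exists>j<k. cop_pos s r i j = r i \<or> cop_pos s r (Suc i) j = r i)"

definition confines :: "'v set \<Rightarrow> ('v \<Rightarrow> 'v \<Rightarrow> bool) \<Rightarrow> 'v set \<Rightarrow> nat \<Rightarrow> ('v list \<Rightarrow> nat \<Rightarrow> 'v) \<Rightarrow> bool" where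
  "confines V E D k s \<longleftrightarrow> (\<forall>r. robber_walk V E r \<and> r 0 \<in> D \<longrightarrow>
     (\<forall>i. r i \<notin> D \<longrightarrow> captured_at k s r i))"

end

(*
  Let \<pi> be a shortest curve of P, a shortest path relative to D. Every string meeting \<pi> belongs
  to a vertex equal or adjacent to some P ! j. The cops follow the robber's shadow on P: his
  distance from hd P in G[P \<union> D], capped at length P - 1. Since P is shortest in G[P \<union> D], the
  shadow of P ! j is j, and as the shadow is 1-Lipschitz, every vertex equal or adjacent to P ! j
  has shadow within 1 of j. While confined to D the robber moves his shadow by at most one per
  round, so a target index T that advances by at most one per round catches up with it within
  length P rounds and from then on equals his previous shadow. Five cops posted on
  P ! (T - 2), ..., P ! (T + 2) then always include one on P ! j when he enters a vertex near
  P ! j, and that cop captures him.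
*)
theory Submission
  imports Defs
begin

lemma walk_in_singleton [simp]: "walk_in E W [x] \<longleftrightarrow> x \<in> W"
  by (auto simp: walk_in_def)

lemma walk_in_append:
  assumes xs: "walk_in E W xs" and ys: "walk_in E W ys" and join: "E (last xs) (hd ys)"
  shows "walk_in E W (xs @ ys)"
  unfolding walk_in_def
proof (intro conjI allI impI)
  fix i assume i: "Suc i < length (xs @ ys)"
  have "xs \<noteq> []" "ys \<noteq> []" using xs ys by (auto simp: walk_in_def)
  consider "Suc i < length xs" | "Suc i = length xs" | "length xs \<le> i" by linarith
  then show "E ((xs @ ys) ! i) ((xs @ ys) ! Suc i)"
  proof cases
    case 1
    then show ?thesis using xs by (simp add: walk_in_def nth_append)
  next
    case 2
    then have "i = length xs - 1" by simp
    then show ?thesis using join \<open>xs \<noteq> []\<close> \<open>ys \<noteq> []\<close>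
      by (simp add: nth_append last_conv_nth hd_conv_nth)
  next
    case 3
    then have "Suc (i - length xs) < length ys" using i by simp
    then show ?thesis using 3 ys by (simp add: walk_in_def nth_append Suc_diff_le)
  qed
qed (use xs ys in \<open>auto simp: walk_in_def\<close>)

lemma walk_in_snoc: "walk_in E W xs \<Longrightarrow> v \<in> W \<Longrightarrow> E (last xs) v \<Longrightarrow> walk_in E W (xs @ [v])"
  by (rule walk_in_append) auto

lemma walk_in_take: "walk_in E W ps \<Longrightarrow> walk_in E W (take (Suc j) ps)"
  by (auto simp: walk_in_def dest: in_set_takeD)

lemma walk_in_drop: "walk_in E W ps \<Longrightarrow> j < length ps \<Longrightarrow> walk_in E W (drop j ps)"
  by (auto simp: walk_in_def dest: in_set_dropD)

lemma walk_in_nth_adjacent: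
  assumes "walk_in E W ps" and sym: "\<And>a b. E a b \<Longrightarrow> E b a"
    and "a < length ps" "b < length ps" "a \<le> Suc b" "b \<le> Suc a"
  shows "ps ! a = ps ! b \<or> E (ps ! a) (ps ! b)"
proof -
  have "a = b \<or> b = Suc a \<or> a = Suc b" using assms(5,6) by linarith
  then show ?thesis using assms unfolding walk_in_def by blast
qed

text \<open>Distance from hd P to v in G[H], capped at length P - 1, which is also the value for
  unreachable v.\<close>
definition path_shadow :: "('v \<Rightarrow> 'v \<Rightarrow> bool) \<Rightarrow> 'v set \<Rightarrow> 'v list \<Rightarrow> 'v \<Rightarrow> nat" where
  "path_shadow E H P v = (LEAST n. n = length P - 1 \<or>
     (\<exists>Q. walk_in E H Q \<and> hd Q = hd P \<and> last Q = v \<and> length Q = Suc n))"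

lemma path_shadow_le_length: "path_shadow E H P v \<le> length P - 1"
  unfolding path_shadow_def by (rule Least_le) simp

lemma path_shadow_lt_walk:
  assumes "walk_in E H Q" "hd Q = hd P" "last Q = v"
  shows "path_shadow E H P v < length Q"
proof -
  have "length Q = Suc (length Q - 1)" using assms(1) by (cases Q) (auto simp: walk_in_def)
  then have "path_shadow E H P v \<le> length Q - 1"
    unfolding path_shadow_def using assms by (intro Least_le) metis
  then show ?thesis using \<open>length Q = Suc (length Q - 1)\<close> by linarith
qed

lemma path_shadow_attained:
  "path_shadow E H P v = length P - 1 \<or>
   (\<exists>Q. walk_in E H Q \<and> hd Q = hd P \<and> last Q = v \<and> length Q = Suc (path_shadow E H P v))"
  unfolding path_shadow_def by (rule LeastI[of _ "length P - 1"]) simp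

lemma path_shadow_step:
  assumes "v \<in> H" "u = v \<or> E u v"
  shows "path_shadow E H P v \<le> Suc (path_shadow E H P u)"
  using path_shadow_attained[of E H P u]
proof
  assume "path_shadow E H P u = length P - 1"
  then show ?thesis using path_shadow_le_length[of E H P v] by linarith
next
  assume "\<exists>Q. walk_in E H Q \<and> hd Q = hd P \<and> last Q = u \<and> length Q = Suc (path_shadow E H P u)"
  then obtain Q where Q: "walk_in E H Q" "hd Q = hd P" "last Q = u"
    "length Q = Suc (path_shadow E H P u)" by blast
  show ?thesis
  proof (cases "u = v")
    case False
    then have "walk_in E H (Q @ [v])" using Q assms by (intro walk_in_snoc) auto
    moreover have "hd (Q @ [v]) = hd P" using Q by (cases Q) (auto simp: walk_in_def)
    ultimately have "path_shadow E H P v < length (Q @ [v])"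
      by (rule path_shadow_lt_walk) simp
    then show ?thesis using Q by simp
  qed simp
qed

lemma path_shadow_adjacent:
  assumes sym: "\<And>a b. E a b \<Longrightarrow> E b a" and "u \<in> H" "v \<in> H" "u = v \<or> E u v"
  shows "path_shadow E H P v \<le> Suc (path_shadow E H P u) \<and>
         path_shadow E H P u \<le> Suc (path_shadow E H P v)"
  using assms by (metis path_shadow_step)

lemma shortest_path_rel_index_lt:
  assumes sp: "shortest_path_rel V E D P" and Q: "walk_in E (set P \<union> D) Q"
    and hd_Q: "hd Q = hd P" and last_Q: "last Q = P ! j" and j: "j < length P"
  shows "j < length Q"
proof -
  define R where "R = Q @ drop (Suc j) P"
  have P: "walk_in E (set P \<union> D) P"
    using sp by (auto simp: shortest_path_rel_def walk_in_def)
  have "walk_in E (set P \<union> D) R \<and> last R = last P"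
  proof (cases "Suc j < length P")
    case True
    have "E (last Q) (hd (drop (Suc j) P))"
      using P True last_Q by (simp add: walk_in_def hd_drop_conv_nth)
    then show ?thesis using True Q P unfolding R_def by (auto intro: walk_in_append walk_in_drop)
  next
    case False
    then have "last P = P ! j"
      using j by (metis Suc_lessI diff_Suc_1 last_conv_nth list.size(3) not_less0)
    then show ?thesis using False Q last_Q unfolding R_def by simp
  qed
  moreover have "hd R = hd P" using Q hd_Q unfolding R_def by (cases Q) (auto simp: walk_in_def)
  ultimately have "length P \<le> length R" using sp unfolding shortest_path_rel_def by blast
  then show ?thesis unfolding R_def using j by simp
qed

lemma path_shadow_nth:
  assumes sp: "shortest_path_rel V E D P" and j: "j < length P"
  shows "path_shadow E (set P \<union> D) P (P ! j) = j"
proof (rule antisym)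
  have "walk_in E (set P \<union> D) P" using sp by (auto simp: shortest_path_rel_def walk_in_def)
  moreover have "last (take (Suc j) P) = P ! j" using j by (simp add: take_Suc_conv_app_nth)
  ultimately have "path_shadow E (set P \<union> D) P (P ! j) < length (take (Suc j) P)"
    by (intro path_shadow_lt_walk walk_in_take) auto
  then show "path_shadow E (set P \<union> D) P (P ! j) \<le> j" by simp
next
  show "j \<le> path_shadow E (set P \<union> D) P (P ! j)"
    using path_shadow_attained[of E "set P \<union> D" P "P ! j"] j
      shortest_path_rel_index_lt[OF sp, of _ j] by fastforce
qed

definition cop_step :: "('v \<Rightarrow> 'v \<Rightarrow> bool) \<Rightarrow> 'v \<Rightarrow> 'v \<Rightarrow> 'v \<Rightarrow> 'v" where
  "cop_step E c x d = (if c = x \<or> E c x then x else if c = d \<or> E c d then d else c)"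

text \<open>Cop j is posted at P ! (T + j - 2), clamped to the index range of P (the natural
  number subtraction clamps below).\<close>
definition formation_index :: "nat \<Rightarrow> nat \<Rightarrow> nat \<Rightarrow> nat" where
  "formation_index L T j = min (T + j - 2) (L - 1)"

lemma formation_index_less: "0 < L \<Longrightarrow> formation_index L T j < L"
  by (simp add: formation_index_def min_less_iff_disj)

text \<open>The state is a target index T and the cop positions; T chases the robber's shadow F
  at speed at most one, and the cops capture whenever they can.\<close>
definition guard_update ::
    "('v \<Rightarrow> 'v \<Rightarrow> bool) \<Rightarrow> 'v list \<Rightarrow> ('v \<Rightarrow> nat) \<Rightarrow> nat \<times> (nat \<Rightarrow> 'v) \<Rightarrow> 'v \<Rightarrow> nat \<times> (nat \<Rightarrow> 'v)" where
  "guard_update E P F = (\<lambda>(T, c) x. let T' = min (Suc T) (F x) in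
     (T', \<lambda>j. cop_step E (c j) x (P ! formation_index (length P) T' j)))"

definition guard_state ::
    "('v \<Rightarrow> 'v \<Rightarrow> bool) \<Rightarrow> 'v list \<Rightarrow> ('v \<Rightarrow> nat) \<Rightarrow> 'v list \<Rightarrow> nat \<times> (nat \<Rightarrow> 'v)" where
  "guard_state E P F xs =
     foldl (guard_update E P F) (0, \<lambda>j. P ! formation_index (length P) 0 j) xs"

definition guard_strategy ::
    "('v \<Rightarrow> 'v \<Rightarrow> bool) \<Rightarrow> 'v list \<Rightarrow> ('v \<Rightarrow> nat) \<Rightarrow> 'v list \<Rightarrow> nat \<Rightarrow> 'v" where
  "guard_strategy E P F xs = snd (guard_state E P F xs)"

definition guard_target ::
    "('v \<Rightarrow> 'v \<Rightarrow> bool) \<Rightarrow> 'v list \<Rightarrow> ('v \<Rightarrow> nat) \<Rightarrow> (nat \<Rightarrow> 'v) \<Rightarrow> nat \<Rightarrow> nat" where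
  "guard_target E P F r i = fst (guard_state E P F (map r [0..<i]))"

lemma guard_target_0 [simp]: "guard_target E P F r 0 = 0"
  by (simp add: guard_target_def guard_state_def)

lemma guard_target_Suc:
  "guard_target E P F r (Suc i) = min (Suc (guard_target E P F r i)) (F (r i))"
  by (simp add: guard_target_def guard_state_def guard_update_def split_beta Let_def)

lemma cop_pos_guard_strategy_0:
  "cop_pos (guard_strategy E P F) r 0 j = P ! formation_index (length P) 0 j"
  by (simp add: cop_pos_def guard_strategy_def guard_state_def)

lemma cop_pos_guard_strategy_Suc:
  "cop_pos (guard_strategy E P F) r (Suc i) j =
     cop_step E (cop_pos (guard_strategy E P F) r i j) (r i)
       (P ! formation_index (length P) (guard_target E P F r (Suc i)) j)"
  by (simp add: cop_pos_def guard_strategy_def guard_target_def guard_state_def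
      guard_update_def split_beta Let_def)

lemma cop_step_legal: "cop_step E c x d = c \<or> E c (cop_step E c x d)"
  by (simp add: cop_step_def)

lemma legal_guard_strategy:
  assumes "set P \<subseteq> V" "P \<noteq> []"
  shows "legal_cop_strategy V E k (guard_strategy E P F)"
  unfolding legal_cop_strategy_def
proof (intro conjI allI impI)
  fix j
  have "formation_index (length P) 0 j < length P"
    using assms(2) by (simp add: formation_index_less)
  then show "guard_strategy E P F [] j \<in> V"
    using assms cop_pos_guard_strategy_0[of E P F _ j] by (auto simp: cop_pos_def)
next
  fix r i j
  show "cop_pos (guard_strategy E P F) r (Suc i) j = cop_pos (guard_strategy E P F) r i j \<or>
        E (cop_pos (guard_strategy E P F) r i j) (cop_pos (guard_strategy E P F) r (Suc i) j)"
    unfolding cop_pos_guard_strategy_Suc by (rule cop_step_legal)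
qed

lemma catch_up:
  fixes T f :: "nat \<Rightarrow> nat"
  assumes T_0: "T 0 = 0" and T_Suc: "\<And>t. T (Suc t) = min (Suc (T t)) (f t)"
    and f_lip: "\<And>t. t < n \<Longrightarrow> f (Suc t) \<le> Suc (f t) \<and> f t \<le> Suc (f (Suc t))"
  shows catch_up_step: "t \<le> n \<Longrightarrow> T t \<le> Suc (T (Suc t))"
    and catch_up_reached: "t \<le> n \<Longrightarrow> f t \<le> t \<Longrightarrow> T (Suc t) = f t"
proof -
  assume "t \<le> n"
  then show "T t \<le> Suc (T (Suc t))"
  proof (cases t)
    case (Suc t')
    then have "T t \<le> f t'" and "f t' \<le> Suc (f t)"
      using T_Suc[of t'] f_lip[of t'] \<open>t \<le> n\<close> by auto
    then show ?thesis using T_Suc[of t] by linarith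
  qed (simp add: T_0)
next
  have "T (Suc t) = f t \<or> T (Suc t) = Suc t" if "t \<le> n" for t
    using that
  proof (induction t)
    case (Suc t)
    then show ?case using T_Suc[of "Suc t"] f_lip[of t] by auto
  qed (simp add: T_Suc T_0 min_def)
  moreover assume "t \<le> n" "f t \<le> t"
  ultimately show "T (Suc t) = f t" using T_Suc[of t] by fastforce
qed

lemma guard_formation:
  assumes P: "walk_in E W P" and sym: "\<And>a b. E a b \<Longrightarrow> E b a"
    and step: "\<And>t. t < i \<Longrightarrow> guard_target E P F r t \<le> Suc (guard_target E P F r (Suc t))"
    and free: "\<And>t. t < i \<Longrightarrow> \<not> captured_at k (guard_strategy E P F) r t"
    and "j < k"
  shows "cop_pos (guard_strategy E P F) r i j =
           P ! formation_index (length P) (guard_target E P F r i) j"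
  using step free
proof (induction i)
  case 0
  then show ?case by (simp add: cop_pos_guard_strategy_0)
next
  case (Suc i)
  let ?c = "cop_pos (guard_strategy E P F) r"
  let ?T = "guard_target E P F r"
  let ?d = "\<lambda>t. P ! formation_index (length P) (?T t) j"
  have c: "?c i j = ?d i" using Suc by simp
  have "\<not> (?c i j = r i \<or> ?c (Suc i) j = r i)"
    using Suc.prems(2)[of i] \<open>j < k\<close> by (auto simp: captured_at_def)
  then have no_capture: "\<not> (?c i j = r i \<or> E (?c i j) (r i))"
    by (auto simp: cop_pos_guard_strategy_Suc cop_step_def)
  have "P \<noteq> []" using P by (simp add: walk_in_def)
  have "?T (Suc i) \<le> Suc (?T i)" "?T i \<le> Suc (?T (Suc i))"
    using guard_target_Suc[of E P F r i] Suc.prems(1)[of i] by auto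
  then have "?d i = ?d (Suc i) \<or> E (?d i) (?d (Suc i))"
    using \<open>P \<noteq> []\<close>
    by (intro walk_in_nth_adjacent[OF P sym] formation_index_less) (auto simp: formation_index_def)
  then show ?case using no_capture c by (auto simp: cop_pos_guard_strategy_Suc cop_step_def)
qed

lemma guard_strategy_captures:
  assumes P: "walk_in E W P" and sym: "\<And>a b. E a b \<Longrightarrow> E b a"
    and F_lt: "\<And>v. F v < length P"
    and F_lip: "\<And>t. t < i \<Longrightarrow> F (r (Suc t)) \<le> Suc (F (r t)) \<and> F (r t) \<le> Suc (F (r (Suc t)))"
    and free: "\<And>t. t < i \<Longrightarrow> \<not> captured_at k (guard_strategy E P F) r t"
    and late: "length P \<le> i" and "5 \<le> k"
    and near: "r i = P ! j \<or> E (r i) (P ! j)" and j: "j < length P"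
    and F_near: "F (r i) \<le> Suc j \<and> j \<le> Suc (F (r i))"
  shows "captured_at k (guard_strategy E P F) r i"
proof -
  let ?T = "guard_target E P F r"
  have T_step: "t \<le> i \<Longrightarrow> ?T t \<le> Suc (?T (Suc t))"
    and T_reached: "t \<le> i \<Longrightarrow> F (r t) \<le> t \<Longrightarrow> ?T (Suc t) = F (r t)" for t
    using catch_up[of ?T "\<lambda>t. F (r t)" i, OF guard_target_0 guard_target_Suc] F_lip by auto
  obtain m where m: "i = Suc m" using late F_lt[of undefined] by (cases i) auto
  have T_i: "?T i = F (r m)"
    using T_reached[of m] F_lt[of "r m"] late m by simp
  define j' where "j' = j + 2 - ?T i"
  have "F (r i) \<le> Suc (F (r m)) \<and> F (r m) \<le> Suc (F (r i))" using F_lip[of m] m by simp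
  then have j': "j' < 5" "formation_index (length P) (?T i) j' = j"
    using F_near T_i j unfolding j'_def formation_index_def by linarith+
  have "cop_pos (guard_strategy E P F) r i j' = P ! j"
    using guard_formation[OF P sym, of i F r k j'] T_step free j' \<open>5 \<le> k\<close> by simp
  moreover have "P ! j = r i \<or> E (P ! j) (r i)" using near sym by auto
  ultimately have "cop_pos (guard_strategy E P F) r (Suc i) j' = r i"
    by (simp add: cop_pos_guard_strategy_Suc cop_step_def)
  then show ?thesis
    unfolding captured_at_def using j'(1) \<open>5 \<le> k\<close> by (intro exI[of _ j']) auto
qed

lemma shortest_path_guard_captures:
  fixes E :: "'v \<Rightarrow> 'v \<Rightarrow> bool" and D :: "'v set" and P :: "'v list"
  defines "F \<equiv> path_shadow E (set P \<union> D) P"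
  assumes sp: "shortest_path_rel V E D P" and sym: "\<And>a b. E a b \<Longrightarrow> E b a"
    and r: "robber_walk V E r" and inside: "\<And>t. t \<le> i \<Longrightarrow> r t \<in> set P \<union> D"
    and free: "\<And>t. t < i \<Longrightarrow> \<not> captured_at k (guard_strategy E P F) r t"
    and late: "length P \<le> i" and "5 \<le> k"
    and j: "j < length P" and near: "r i = P ! j \<or> E (r i) (P ! j)"
  shows "captured_at k (guard_strategy E P F) r i"
proof -
  have P: "walk_in E V P" using sp by (simp add: shortest_path_rel_def)
  then have "0 < length P" by (simp add: walk_in_def)
  then have F_lt: "F v < length P" for v
    using path_shadow_le_length[of E "set P \<union> D" P v] unfolding F_def by linarith
  have F_lip: "F (r (Suc t)) \<le> Suc (F (r t)) \<and> F (r t) \<le> Suc (F (r (Suc t)))" if "t < i" for t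
  proof -
    have "r t = r (Suc t) \<or> E (r t) (r (Suc t))" using r unfolding robber_walk_def by metis
    then show ?thesis
      unfolding F_def using path_shadow_adjacent[OF sym inside inside] that by simp
  qed
  have "F (P ! j) = j" unfolding F_def using path_shadow_nth[OF sp j] .
  moreover have "P ! j = r i \<or> E (P ! j) (r i)" using near sym by auto
  then have "F (r i) \<le> Suc (F (P ! j)) \<and> F (P ! j) \<le> Suc (F (r i))"
    unfolding F_def using path_shadow_adjacent[OF sym _ inside[of i]] j by simp
  ultimately have F_near: "F (r i) \<le> Suc j \<and> j \<le> Suc (F (r i))" by simp
  show ?thesis
    by (rule guard_strategy_captures[OF P sym F_lt F_lip free late \<open>5 \<le> k\<close> near j F_near])
qed

lemma string_rep_meets_shortest_curve:
  assumes "string_rep V E \<phi>" and "shortest_curve_of \<phi> P A B \<pi>" and "set P \<subseteq> V"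
    and "u \<in> V" and "\<phi> u \<inter> \<pi> \<noteq> {}"
  obtains j where "j < length P" "u = P ! j \<or> E u (P ! j)"
proof -
  obtain p where p: "p \<in> set P" "\<phi> u \<inter> \<phi> p \<noteq> {}"
    using assms(2,5) unfolding shortest_curve_of_def by blast
  then obtain j where "j < length P" "p = P ! j" by (metis in_set_conv_nth)
  moreover have "u = p \<or> E u p" using assms(1,3,4) p by (auto simp: string_rep_def)
  ultimately show ?thesis using that by blast
qed

theorem corollary2:
  fixes V :: "'v set" and E :: "'v \<Rightarrow> 'v \<Rightarrow> bool" and \<phi> :: "'v \<Rightarrow> (real^2) set"
    and D :: "'v set" and \<pi> :: "(real^2) set"
    and k :: nat and s :: "'v list \<Rightarrow> nat \<Rightarrow> 'v"
  assumes "finite V" and "string_rep V E \<phi>" and "D \<subseteq> V"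
    and "legal_cop_strategy V E k s" and "confines V E D k s"
    and "shortest_curve_rel V E \<phi> D \<pi>"
  shows "\<exists>s5. legal_cop_strategy V E 5 s5 \<and>
    (\<forall>r. robber_walk V E r \<and> r 0 \<in> D \<longrightarrow>
      (\<exists>N. \<forall>i\<ge>N. (\<exists>t\<le>i. captured_at k s r t \<or> captured_at 5 s5 r t) \<or>
                  (\<phi> (r i) \<inter> \<pi> \<noteq> {} \<longrightarrow> captured_at 5 s5 r i)))"
proof -
  have sym: "\<And>a b. E a b \<Longrightarrow> E b a" using assms(2) by (auto simp: string_rep_def)
  obtain P A B where sp: "shortest_path_rel V E D P" and sc: "shortest_curve_of \<phi> P A B \<pi>"
    using assms(6) unfolding shortest_curve_rel_def by blast
  have PV: "set P \<subseteq> V" and "P \<noteq> []"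
    using sp by (simp_all add: shortest_path_rel_def walk_in_def)
  define s5 where "s5 = guard_strategy E P (path_shadow E (set P \<union> D) P)"
  have "legal_cop_strategy V E 5 s5"
    unfolding s5_def using PV \<open>P \<noteq> []\<close> by (rule legal_guard_strategy)
  moreover have "captured_at 5 s5 r i"
    if r: "robber_walk V E r" "r 0 \<in> D" and late: "length P \<le> i"
      and free: "\<not> (\<exists>t\<le>i. captured_at k s r t \<or> captured_at 5 s5 r t)"
      and meets: "\<phi> (r i) \<inter> \<pi> \<noteq> {}" for r i
  proof -
    have inside: "r t \<in> D" if "t \<le> i" for t
      using assms(5) r free that unfolding confines_def by blast
    obtain j where j: "j < length P" and near: "r i = P ! j \<or> E (r i) (P ! j)"
      using string_rep_meets_shortest_curve[OF assms(2) sc PV _ meets] inside[of i] assms(3)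
      by blast
    show ?thesis
      unfolding s5_def
      by (rule shortest_path_guard_captures[OF sp sym r(1) _ _ late _ j near])
        (use inside free in \<open>auto simp: s5_def\<close>)
  qed
  ultimately show ?thesis
    by (intro exI[of _ s5] conjI allI impI exI[of _ "length P"]) auto
qed

end
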